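(* Let $n\ge1$, $k\in\{1,\dots,n\}$, $b>0$, $\bm d\in\mathbb R^n$ with $d_i>0$ for all $i$, $\tilde{\bm a}\in\mathbb R^n$, and let $Y\subseteq\mathbb R^n$ be nonempty. Consider $$\xi=\min_{\bm y\in Y}\ \tilde{\bm a}^\top\bm y+\max_{(\bm x,\bm z)\in\mathbb R^n\times[0,1]^n}\Big\{\bm x^\top\bm y:\ \sum_{i=1}^n\frac{(d_ix_i)^2}{z_i}\le b,\ \sum_{i=1}^nz_i\le k\Big\}.$$ For $\bm y\in\mathbb R^n$, let $(1),\dots,(n)$ be a permutation of $\{1,\dots,n\}$ with $(y_{(1)}/d_{(1)})^2\ge\cdots\ge(y_{(n)}/d_{(n)})^2$ and let $s(\bm y)=\sum_{i=1}^k(y_{(i)}/d_{(i)})^2$. Then $$\xi=\min_{\bm y\in Y}\ \tilde{\bm a}^\top\bm y+\sqrt{b\,s(\bm y)},$$ and moreover $\xi$ equals the optimal value of $$\min_{\bm y,\bm t,\lambda,\mu}\ \tilde{\bm a}^\top\bm y+\lambda b+\mu k+\sum_{i=1}^nt_i\quad\text{s.t.}\quad (y_i/d_i)^2\le4(t_i+\mu)\lambda\ (i=1,\dots,n),\ \bm y\in Y,\ \bm t\in\mathbb R^n_+,\ \lambda\ge0,\ \mu\ge0$$ (with "min" understood as infimum where needed).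
   Context: Division convention: $a/b=0$ if $a=b=0$, and $a/b=+\infty$ if $b=0$ and $a\ne0$, so the constraint $\sum_i (d_ix_i)^2/z_i\le b$ forces $x_i=0$ whenever $z_i=0$. *)

theory Defs
  imports "HOL-Analysis.Analysis" "HOL-Library.Extended_Real"
begin

text \<open>Vectors in R^n are represented as functions nat => real; only the
coordinates 1..n are relevant.\<close>

definition cdiv :: "real \<Rightarrow> real \<Rightarrow> ereal" where
  "cdiv a c = (if c = 0 then (if a = 0 then 0 else \<infinity>) else ereal (a / c))"

definition inner_feasible :: "nat \<Rightarrow> nat \<Rightarrow> real \<Rightarrow> (nat \<Rightarrow> real) \<Rightarrow> (nat \<Rightarrow> real) \<Rightarrow> (nat \<Rightarrow> real) \<Rightarrow> bool" where
  "inner_feasible n k b d x z \<longleftrightarrow>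
     (\<forall>i\<in>{1..n}. 0 \<le> z i \<and> z i \<le> 1) \<and>
     (\<Sum>i=1..n. cdiv ((d i * x i)\<^sup>2) (z i)) \<le> ereal b \<and>
     (\<Sum>i=1..n. z i) \<le> real k"

definition inner_max :: "nat \<Rightarrow> nat \<Rightarrow> real \<Rightarrow> (nat \<Rightarrow> real) \<Rightarrow> (nat \<Rightarrow> real) \<Rightarrow> ereal" where
  "inner_max n k b d y =
     (SUP xz \<in> {(x, z). inner_feasible n k b d x z}. ereal (\<Sum>i=1..n. fst xz i * y i))"

definition sorting_perm :: "nat \<Rightarrow> (nat \<Rightarrow> real) \<Rightarrow> (nat \<Rightarrow> real) \<Rightarrow> (nat \<Rightarrow> nat) \<Rightarrow> bool" where
  "sorting_perm n d y p \<longleftrightarrow> p permutes {1..n} \<and>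
     (\<forall>i\<in>{1..n}. \<forall>j\<in>{1..n}. i \<le> j \<longrightarrow> (y (p j) / d (p j))\<^sup>2 \<le> (y (p i) / d (p i))\<^sup>2)"

definition s_val :: "nat \<Rightarrow> nat \<Rightarrow> (nat \<Rightarrow> real) \<Rightarrow> (nat \<Rightarrow> real) \<Rightarrow> real" where
  "s_val n k d y = (let p = (SOME p. sorting_perm n d y p) in
     (\<Sum>i=1..k. (y (p i) / d (p i))\<^sup>2))"

end

theory Submission imports Defs begin

text \<open>Write \<open>w\<^sub>i = (y\<^sub>i/d\<^sub>i)\<^sup>2\<close> and \<open>s\<close> for the sum of the \<open>k\<close> largest \<open>w\<^sub>i\<close>.
  Substituting \<open>u\<^sub>i = d\<^sub>i x\<^sub>i\<close>, the inner objective is \<open>\<Sum> u\<^sub>i (y\<^sub>i/d\<^sub>i)\<close>, and for every \<open>\<lambda> > 0\<close>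
  the AM-GM inequality bounds it by \<open>\<lambda> \<Sum> u\<^sub>i\<^sup>2/z\<^sub>i + \<Sum> z\<^sub>i w\<^sub>i / (4\<lambda>) \<le> \<lambda> b + s/(4\<lambda>)\<close>,
  because a fractional choice of at most \<open>k\<close> weights \<open>z \<in> [0,1]\<^sup>n\<close> cannot beat the top \<open>k\<close>.
  Minimising over \<open>\<lambda>\<close> gives \<open>\<surd>(b s)\<close>, which is attained by putting \<open>z\<close> on the top \<open>k\<close>
  indices and \<open>x\<close> proportional to \<open>y\<^sub>i/d\<^sub>i\<^sup>2\<close> there.  The same threshold argument run
  dually, with \<open>\<mu> = w\<^sub>(\<^sub>k\<^sub>)/(4\<lambda>)\<close> and \<open>t\<^sub>i = max 0 (w\<^sub>i - w\<^sub>(\<^sub>k\<^sub>))/(4\<lambda>)\<close>, shows that the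
  conic reformulation has the same value \<open>\<surd>(b s)\<close> for every fixed \<open>y\<close>.\<close>

lemma exists_decreasing_permutation:
  fixes f :: "nat \<Rightarrow> real"
  shows "\<exists>p. p permutes {1..n} \<and> (\<forall>i\<in>{1..n}. \<forall>j\<in>{1..n}. i \<le> j \<longrightarrow> f (p j) \<le> f (p i))"
proof -
  define xs where "xs = sort_key (\<lambda>i. - f i) [1..<n+1]"
  have len: "length xs = n" and dist: "distinct xs" and set_xs: "set xs = {1..n}"
    and sorted: "sorted (map (\<lambda>i. - f i) xs)"
    by (auto simp: xs_def)
  define p where "p i = (if i \<in> {1..n} then xs ! (i - 1) else i)" for i
  have "bij_betw ((!) xs) {..<n} {1..n}"
    using bij_betw_nth[OF dist] len set_xs by simp
  moreover have "bij_betw (\<lambda>i. i - 1) {1..n} {..<n}"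
    by (rule bij_betw_byWitness[where f'="\<lambda>i. i + 1"]) auto
  ultimately have "bij_betw ((!) xs \<circ> (\<lambda>i. i - 1)) {1..n} {1..n}"
    by (rule bij_betw_trans[rotated])
  then have "bij_betw p {1..n} {1..n}"
    by (rule bij_betw_cong[THEN iffD1, rotated]) (simp add: p_def)
  then have perm: "p permutes {1..n}"
    by (rule bij_imp_permutes) (auto simp: p_def)
  have "f (p j) \<le> f (p i)" if "i \<in> {1..n}" "j \<in> {1..n}" "i \<le> j" for i j
    using sorted_nth_mono[OF sorted, of "i - 1" "j - 1"] that len by (simp add: p_def)
  with perm show ?thesis by blast
qed

lemma mult_le_perspective_add_square:
  fixes u v z lam :: real
  assumes "lam > 0" "z \<ge> 0" "z = 0 \<Longrightarrow> u = 0"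
  shows "u * v \<le> lam * (u\<^sup>2 / z) + z * v\<^sup>2 / (4 * lam)"
proof (cases "z = 0")
  case False
  with assms have "lam * (u\<^sup>2 / z) + z * v\<^sup>2 / (4 * lam) - u * v = (2 * lam * u - z * v)\<^sup>2 / (4 * lam * z)"
    by (simp add: field_simps power2_eq_square)
  also have "\<dots> \<ge> 0" using assms by simp
  finally show ?thesis by simp
qed (use assms in simp)

lemma sqrt_mult_le_add_divide:
  fixes lam b S :: real
  assumes "lam > 0" "b \<ge> 0" "S \<ge> 0"
  shows "sqrt (b * S) \<le> lam * b + S / (4 * lam)"
proof -
  define X where "X = lam * b + S / (4 * lam)"
  have "X\<^sup>2 - b * S = (lam * b - S / (4 * lam))\<^sup>2"
    using assms(1) by (simp add: X_def field_simps power2_eq_square)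
  then have "b * S \<le> X\<^sup>2" by (metis diff_ge_0_iff_ge zero_le_power2)
  moreover have "X \<ge> 0" using assms by (simp add: X_def)
  ultimately show ?thesis unfolding X_def[symmetric] by (metis real_sqrt_abs real_sqrt_le_mono abs_of_nonneg)
qed

lemma sqrt_mult_eq_add_divide_at_optimum:
  fixes b S :: real
  assumes "b > 0" "S > 0"
  defines "lam \<equiv> sqrt (b * S) / (2 * b)"
  shows "lam > 0" and "lam * b + S / (4 * lam) = sqrt (b * S)"
proof -
  define r where "r = sqrt (b * S)"
  have r: "r > 0" "r * r = b * S" using assms by (simp_all add: r_def)
  show "lam > 0" unfolding lam_def r_def[symmetric] using r assms by simp
  have "lam * b + S / (4 * lam) = r / 2 + (b * S) / (2 * r)"
    unfolding lam_def r_def[symmetric] using assms r by (simp add: field_simps)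
  also have "\<dots> = r" using r by (simp add: r(2)[symmetric] field_simps)
  finally show "lam * b + S / (4 * lam) = sqrt (b * S)" by (simp add: r_def)
qed

locale top_k =
  fixes n k :: nat and w :: "nat \<Rightarrow> real" and p :: "nat \<Rightarrow> nat"
  assumes permutes: "p permutes {1..n}"
    and decreasing: "\<lbrakk>i \<in> {1..n}; j \<in> {1..n}; i \<le> j\<rbrakk> \<Longrightarrow> w (p j) \<le> w (p i)"
    and k_range: "k \<in> {1..n}"
    and nonneg: "0 \<le> w i"
begin

definition top_sum :: real where "top_sum = (\<Sum>j=1..k. w (p j))"

lemma permutation_in_range: "j \<in> {1..n} \<Longrightarrow> p j \<in> {1..n}"
  using permutes_in_image[OF permutes] by blast

lemma sum_reindex: "(\<Sum>i=1..n. g i) = (\<Sum>j=1..n. g (p j))"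
  using sum.reindex_bij_betw[OF permutes_imp_bij[OF permutes], of g] by simp

lemma top_sum_nonneg: "0 \<le> top_sum"
  by (simp add: top_sum_def sum_nonneg nonneg)

lemma weight_eq_0_if_top_sum_eq_0:
  assumes "top_sum = 0" "i \<in> {1..n}"
  shows "w i = 0"
proof -
  obtain j where j: "j \<in> {1..n}" "i = p j"
    using permutes_image[OF permutes] assms(2) by blast
  have "w (p j) \<le> w (p 1)" using decreasing[of 1 j] j k_range by auto
  also have "w (p 1) \<le> top_sum"
    unfolding top_sum_def by (rule member_le_sum) (use k_range nonneg in auto)
  finally show ?thesis using assms j nonneg[of i] by simp
qed

lemma sum_indicator_top:
  "(\<Sum>i=1..n. if i \<in> p ` {1..k} then g i else 0) = (\<Sum>j=1..k. g (p j))"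
proof -
  have "p ` {1..k} \<subseteq> {1..n}" using permutation_in_range k_range by auto
  then have "(\<Sum>i=1..n. if i \<in> p ` {1..k} then g i else 0) = sum g (p ` {1..k})"
    by (simp add: sum.inter_restrict[symmetric] Int_absorb1)
  also have "\<dots> = (\<Sum>j=1..k. g (p j))"
    by (rule sum.reindex[unfolded comp_def]) (rule permutes_inj_on[OF permutes])
  finally show ?thesis .
qed

lemma sum_excess_over_kth:
  "(\<Sum>i=1..n. max 0 (w i - w (p k))) = top_sum - real k * w (p k)"
proof -
  let ?e = "\<lambda>j. max 0 (w (p j) - w (p k))"
  have split: "{1..n} = {1..k} \<union> {Suc k..n}" using k_range by auto
  have "(\<Sum>i=1..n. max 0 (w i - w (p k))) = (\<Sum>j=1..n. ?e j)"
    by (rule sum_reindex)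
  also have "\<dots> = (\<Sum>j=1..k. ?e j) + (\<Sum>j=Suc k..n. ?e j)"
    unfolding split by (rule sum.union_disjoint) auto
  also have "(\<Sum>j=1..k. ?e j) = (\<Sum>j=1..k. w (p j) - w (p k))"
    by (rule sum.cong) (use decreasing k_range in auto)
  also have "(\<Sum>j=Suc k..n. ?e j) = 0"
    by (rule sum.neutral) (use decreasing k_range in force)
  finally show ?thesis by (simp add: sum_subtractf top_sum_def)
qed

lemma weighted_sum_le_top_sum:
  assumes "\<forall>i\<in>{1..n}. 0 \<le> z i \<and> z i \<le> 1" "(\<Sum>i=1..n. z i) \<le> real k"
  shows "(\<Sum>i=1..n. z i * w i) \<le> top_sum"
proof -
  let ?th = "w (p k)"
  have "z i * (w i - ?th) \<le> max 0 (w i - ?th)" if "i \<in> {1..n}" for i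
    using assms(1) that mult_left_le_one_le[of "w i - ?th" "z i"]
    by (cases "?th \<le> w i") (auto simp: mult_nonneg_nonpos)
  then have "(\<Sum>i=1..n. z i * w i) \<le> (\<Sum>i=1..n. z i * ?th + max 0 (w i - ?th))"
    by (intro sum_mono) (simp add: algebra_simps)
  also have "\<dots> = (\<Sum>i=1..n. z i) * ?th + (top_sum - real k * ?th)"
    using sum_excess_over_kth by (simp add: sum.distrib sum_distrib_right)
  also have "\<dots> \<le> real k * ?th + (top_sum - real k * ?th)"
    using assms(2) nonneg by (simp add: mult_right_mono)
  finally show ?thesis by simp
qed

lemma top_sum_le_dual:
  assumes "0 \<le> mu" "\<forall>i\<in>{1..n}. 0 \<le> t i" "\<forall>i\<in>{1..n}. w i \<le> t i + mu"
  shows "top_sum \<le> mu * real k + (\<Sum>i=1..n. t i)"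
proof -
  have "top_sum \<le> (\<Sum>j=1..k. t (p j) + mu)"
    unfolding top_sum_def by (rule sum_mono) (use assms(3) permutation_in_range k_range in auto)
  also have "\<dots> = (\<Sum>j=1..k. t (p j)) + mu * real k"
    by (simp add: sum.distrib)
  also have "(\<Sum>j=1..k. t (p j)) \<le> (\<Sum>j=1..n. t (p j))"
    by (rule sum_mono2) (use k_range assms(2) permutation_in_range in auto)
  finally show ?thesis using sum_reindex[of t] by simp
qed

end

definition dual_feasible :: "nat \<Rightarrow> (nat \<Rightarrow> real) \<Rightarrow> (nat \<Rightarrow> real) \<Rightarrow> ((nat \<Rightarrow> real) \<times> real \<times> real) set"
  where "dual_feasible n d y = {(t, lam, mu). (\<forall>i\<in>{1..n}. t i \<ge> 0) \<and> lam \<ge> 0 \<and> mu \<ge> 0 \<and>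
            (\<forall>i\<in>{1..n}. (y i / d i)\<^sup>2 \<le> 4 * (t i + mu) * lam)}"

context
  fixes n k :: nat and b :: real and d y :: "nat \<Rightarrow> real"
  assumes k_range: "k \<in> {1..n}" and b_pos: "0 < b" and d_pos: "\<forall>i\<in>{1..n}. d i > 0"
begin

definition sorting :: "nat \<Rightarrow> nat" where "sorting = (SOME p. sorting_perm n d y p)"

interpretation top_k n k "\<lambda>i. (y i / d i)\<^sup>2" sorting
proof -
  have "\<exists>p. sorting_perm n d y p"
    using exists_decreasing_permutation[of n "\<lambda>i. (y i / d i)\<^sup>2"]
    unfolding sorting_perm_def by blast
  then have "sorting_perm n d y sorting" unfolding sorting_def by (rule someI_ex)
  then show "top_k n k (\<lambda>i. (y i / d i)\<^sup>2) sorting"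
    using k_range by unfold_locales (auto simp: sorting_perm_def)
qed

lemma s_val_eq_top_sum: "s_val n k d y = top_sum"
  unfolding top_sum_def unfolding s_val_def sorting_def Let_def ..

lemma inner_feasible_finite:
  assumes "inner_feasible n k b d x z"
  shows "\<forall>i\<in>{1..n}. z i = 0 \<longrightarrow> x i = 0" and "(\<Sum>i=1..n. (d i * x i)\<^sup>2 / z i) \<le> b"
proof -
  have bound: "(\<Sum>i=1..n. cdiv ((d i * x i)\<^sup>2) (z i)) \<le> ereal b"
    using assms by (auto simp: inner_feasible_def)
  then have finite: "cdiv ((d i * x i)\<^sup>2) (z i) \<noteq> \<infinity>" if "i \<in> {1..n}" for i
    using that sum_Pinfty[of "\<lambda>i. cdiv ((d i * x i)\<^sup>2) (z i)" "{1..n}"] by auto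
  have x_zero: "x i = 0" if "i \<in> {1..n}" "z i = 0" for i
  proof -
    have "(d i * x i)\<^sup>2 = 0" using finite[OF that(1)] that(2) by (simp add: cdiv_def split: if_splits)
    moreover have "d i > 0" using d_pos that(1) by blast
    ultimately show "x i = 0" by simp
  qed
  then show "\<forall>i\<in>{1..n}. z i = 0 \<longrightarrow> x i = 0" by blast
  have "(\<Sum>i=1..n. cdiv ((d i * x i)\<^sup>2) (z i)) = (\<Sum>i=1..n. ereal ((d i * x i)\<^sup>2 / z i))"
    by (rule sum.cong) (auto simp: cdiv_def x_zero)
  then show "(\<Sum>i=1..n. (d i * x i)\<^sup>2 / z i) \<le> b" using bound by simp
qed

lemma inner_objective_le:
  assumes "inner_feasible n k b d x z"
  shows "(\<Sum>i=1..n. x i * y i) \<le> sqrt (b * s_val n k d y)"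
proof (cases "top_sum = 0")
  case True
  have "y i = 0" if "i \<in> {1..n}" for i
  proof -
    have "d i > 0" using d_pos that by blast
    then show ?thesis using weight_eq_0_if_top_sum_eq_0[OF True that] by simp
  qed
  then show ?thesis by (simp add: s_val_eq_top_sum True)
next
  case False
  then have S_pos: "top_sum > 0" using top_sum_nonneg by simp
  define lam where "lam = sqrt (b * top_sum) / (2 * b)"
  note lam = sqrt_mult_eq_add_divide_at_optimum[OF b_pos S_pos, folded lam_def]
  have z: "\<forall>i\<in>{1..n}. 0 \<le> z i \<and> z i \<le> 1" "(\<Sum>i=1..n. z i) \<le> real k"
    using assms by (auto simp: inner_feasible_def)
  note feas = inner_feasible_finite[OF assms]
  have "x i * y i \<le> lam * ((d i * x i)\<^sup>2 / z i) + z i * (y i / d i)\<^sup>2 / (4 * lam)"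
    if "i \<in> {1..n}" for i
  proof -
    have "d i > 0" "0 \<le> z i" "z i = 0 \<Longrightarrow> d i * x i = 0"
      using d_pos z(1) feas(1) that by auto
    then show ?thesis
      using mult_le_perspective_add_square[OF lam(1), of "z i" "d i * x i" "y i / d i"] by simp
  qed
  then have "(\<Sum>i=1..n. x i * y i)
      \<le> lam * (\<Sum>i=1..n. (d i * x i)\<^sup>2 / z i) + (\<Sum>i=1..n. z i * (y i / d i)\<^sup>2) / (4 * lam)"
    by (subst sum_distrib_left, subst sum_divide_distrib, subst sum.distrib[symmetric])
       (rule sum_mono, simp)
  also have "\<dots> \<le> lam * b + top_sum / (4 * lam)"
    using feas(2) weighted_sum_le_top_sum[OF z] lam(1)
    by (intro add_mono mult_left_mono divide_right_mono) auto
  finally show ?thesis using lam(2) by (simp add: s_val_eq_top_sum)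
qed

lemma inner_objective_attained:
  "\<exists>x z. inner_feasible n k b d x z \<and> (\<Sum>i=1..n. x i * y i) = sqrt (b * s_val n k d y)"
proof (cases "top_sum = 0")
  case True
  have "inner_feasible n k b d (\<lambda>_. 0) (\<lambda>_. 0)"
    using b_pos by (auto simp: inner_feasible_def cdiv_def)
  then show ?thesis by (auto simp: s_val_eq_top_sum True)
next
  case False
  let ?A = "sorting ` {1..k}"
  have S_pos: "top_sum > 0" using False top_sum_nonneg by simp
  define c where "c = sqrt (b / top_sum)"
  define z where "z i = (if i \<in> ?A then 1 else 0 :: real)" for i
  define x where "x i = c * z i * y i / (d i)\<^sup>2" for i
  have "cdiv ((d i * x i)\<^sup>2) (z i) = ereal (c\<^sup>2 * (if i \<in> ?A then (y i / d i)\<^sup>2 else 0))"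
    if "i \<in> {1..n}" for i
    using d_pos that by (simp add: cdiv_def z_def x_def field_simps power2_eq_square)
  then have "(\<Sum>i=1..n. cdiv ((d i * x i)\<^sup>2) (z i)) = ereal (c\<^sup>2 * top_sum)"
    using sum_indicator_top[of "\<lambda>i. (y i / d i)\<^sup>2"]
    by (simp add: sum_distrib_left[symmetric] top_sum_def)
  also have "c\<^sup>2 * top_sum = b" using S_pos b_pos by (simp add: c_def)
  finally have "inner_feasible n k b d x z"
    using sum_indicator_top[of "\<lambda>_. 1 :: real"] k_range by (auto simp: inner_feasible_def z_def)
  moreover have "(\<Sum>i=1..n. x i * y i) = (\<Sum>i=1..n. c * (if i \<in> ?A then (y i / d i)\<^sup>2 else 0))"
    by (rule sum.cong) (use d_pos in \<open>auto simp: x_def z_def field_simps power2_eq_square\<close>)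
  moreover have "\<dots> = c * top_sum"
    using sum_indicator_top[of "\<lambda>i. (y i / d i)\<^sup>2"]
    by (simp add: sum_distrib_left[symmetric] top_sum_def)
  moreover have "c * top_sum = sqrt (b * top_sum)"
    using S_pos by (simp add: c_def real_sqrt_divide real_sqrt_mult field_simps)
  ultimately show ?thesis by (auto simp: s_val_eq_top_sum)
qed

lemma inner_max_eq_sqrt: "inner_max n k b d y = ereal (sqrt (b * s_val n k d y))"
proof -
  obtain x z where "inner_feasible n k b d x z" "(\<Sum>i=1..n. x i * y i) = sqrt (b * s_val n k d y)"
    using inner_objective_attained by blast
  moreover have "ereal (\<Sum>i=1..n. fst xz i * y i) \<le> ereal (sqrt (b * s_val n k d y))"
    if "xz \<in> {(x, z). inner_feasible n k b d x z}" for xz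
    using that inner_objective_le[of "fst xz" "snd xz"] by (simp add: case_prod_beta)
  ultimately show ?thesis
    unfolding inner_max_def by (intro antisym SUP_least SUP_upper2[of "(x, z)"]) auto
qed

lemma sqrt_le_dual_objective:
  assumes "(t, lam, mu) \<in> dual_feasible n d y"
  shows "sqrt (b * s_val n k d y) \<le> lam * b + mu * real k + (\<Sum>i=1..n. t i)"
proof -
  have t: "\<forall>i\<in>{1..n}. t i \<ge> 0" and lam: "lam \<ge> 0" and mu: "mu \<ge> 0"
    and cone: "\<forall>i\<in>{1..n}. (y i / d i)\<^sup>2 \<le> 4 * (t i + mu) * lam"
    using assms by (auto simp: dual_feasible_def)
  show ?thesis
  proof (cases "lam = 0")
    case True
    with cone have "\<forall>i\<in>{1..n}. (y i / d i)\<^sup>2 \<le> 0 + 0" by simp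
    then have "top_sum \<le> 0 * real k + (\<Sum>i=1..n. 0)"
      by (intro top_sum_le_dual) auto
    then have "s_val n k d y = 0" using top_sum_nonneg by (simp add: s_val_eq_top_sum)
    moreover have "0 \<le> mu * real k + (\<Sum>i=1..n. t i)"
      using t mu by (intro add_nonneg_nonneg mult_nonneg_nonneg sum_nonneg) auto
    ultimately show ?thesis using True by simp
  next
    case False
    with lam have lam_pos: "lam > 0" by simp
    have "(y i / d i)\<^sup>2 \<le> 4 * lam * t i + 4 * lam * mu" if "i \<in> {1..n}" for i
      using cone that by (simp add: algebra_simps)
    then have "top_sum \<le> 4 * lam * mu * real k + (\<Sum>i=1..n. 4 * lam * t i)"
      using top_sum_le_dual[of "4 * lam * mu" "\<lambda>i. 4 * lam * t i"] t mu lam by simp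
    also have "\<dots> = (mu * real k + (\<Sum>i=1..n. t i)) * (4 * lam)"
      by (simp add: sum_distrib_left algebra_simps)
    finally have "top_sum / (4 * lam) \<le> mu * real k + (\<Sum>i=1..n. t i)"
      using lam_pos by (simp add: pos_divide_le_eq)
    moreover have "sqrt (b * top_sum) \<le> lam * b + top_sum / (4 * lam)"
      using lam_pos b_pos top_sum_nonneg by (intro sqrt_mult_le_add_divide) auto
    ultimately show ?thesis by (simp add: s_val_eq_top_sum)
  qed
qed

lemma dual_objective_attained:
  obtains t lam mu where "(t, lam, mu) \<in> dual_feasible n d y"
    and "lam * b + mu * real k + (\<Sum>i=1..n. t i) = sqrt (b * s_val n k d y)"
proof (cases "top_sum = 0")
  case True
  then have "(y i / d i)\<^sup>2 = 0" if "i \<in> {1..n}" for i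
    using weight_eq_0_if_top_sum_eq_0 that by blast
  then show ?thesis
    by (intro that[of "\<lambda>_. 0" 0 0]) (auto simp: dual_feasible_def s_val_eq_top_sum True)
next
  case False
  let ?th = "(y (sorting k) / d (sorting k))\<^sup>2"
  have S_pos: "top_sum > 0" using False top_sum_nonneg by simp
  define lam where "lam = sqrt (b * top_sum) / (2 * b)"
  note lam = sqrt_mult_eq_add_divide_at_optimum[OF b_pos S_pos, folded lam_def]
  define mu where "mu = ?th / (4 * lam)"
  define t where "t i = max 0 ((y i / d i)\<^sup>2 - ?th) / (4 * lam)" for i
  have "4 * (t i + mu) * lam = max 0 ((y i / d i)\<^sup>2 - ?th) + ?th" for i
    using lam by (simp add: t_def mu_def field_simps)
  then have "(t, lam, mu) \<in> dual_feasible n d y"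
    using lam(1) by (auto simp: dual_feasible_def t_def mu_def)
  moreover have "lam * b + mu * real k + (\<Sum>i=1..n. t i) = sqrt (b * s_val n k d y)"
  proof -
    have "mu * real k + (\<Sum>i=1..n. t i)
        = (real k * ?th + (\<Sum>i=1..n. max 0 ((y i / d i)\<^sup>2 - ?th))) / (4 * lam)"
      by (simp add: t_def mu_def sum_divide_distrib add_divide_distrib)
    also have "\<dots> = top_sum / (4 * lam)" using sum_excess_over_kth by simp
    finally show ?thesis using lam(2) by (simp add: s_val_eq_top_sum)
  qed
  ultimately show ?thesis by (rule that)
qed

lemma dual_INF_eq_sqrt:
  "(INF tlm \<in> dual_feasible n d y.
      case tlm of (t, lam, mu) \<Rightarrow> ereal (c + lam * b + mu * real k + (\<Sum>i=1..n. t i)))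
    = ereal (c + sqrt (b * s_val n k d y))"
proof (rule antisym)
  obtain t lam mu where "(t, lam, mu) \<in> dual_feasible n d y"
    and "lam * b + mu * real k + (\<Sum>i=1..n. t i) = sqrt (b * s_val n k d y)"
    by (rule dual_objective_attained)
  then show "(INF tlm \<in> dual_feasible n d y.
      case tlm of (t, lam, mu) \<Rightarrow> ereal (c + lam * b + mu * real k + (\<Sum>i=1..n. t i)))
    \<le> ereal (c + sqrt (b * s_val n k d y))"
    by (intro INF_lower2) (auto simp: algebra_simps)
  show "ereal (c + sqrt (b * s_val n k d y)) \<le> (INF tlm \<in> dual_feasible n d y.
      case tlm of (t, lam, mu) \<Rightarrow> ereal (c + lam * b + mu * real k + (\<Sum>i=1..n. t i)))"
    by (rule INF_greatest) (auto dest: sqrt_le_dual_objective)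
qed

end

theorem proposition6:
  fixes n k :: nat and b :: real and d a :: "nat \<Rightarrow> real" and Y :: "(nat \<Rightarrow> real) set"
  assumes "1 \<le> n" and "k \<in> {1..n}" and "b > 0"
    and "\<forall>i\<in>{1..n}. d i > 0"
    and "Y \<noteq> {}"
    and "Y \<subseteq> {y. \<forall>i. i \<notin> {1..n} \<longrightarrow> y i = 0}"
  shows "(INF y\<in>Y. ereal (\<Sum>i=1..n. a i * y i) + inner_max n k b d y)
           = (INF y\<in>Y. ereal ((\<Sum>i=1..n. a i * y i) + sqrt (b * s_val n k d y)))
       \<and> (INF y\<in>Y. ereal (\<Sum>i=1..n. a i * y i) + inner_max n k b d y)
           = (INF ytlm \<in> {(y, t, lam, mu). y \<in> Y \<and> (\<forall>i\<in>{1..n}. t i \<ge> 0) \<and> lam \<ge> 0 \<and> mu \<ge> 0 \<and>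
                   (\<forall>i\<in>{1..n}. (y i / d i)\<^sup>2 \<le> 4 * (t i + mu) * lam)}.
                case ytlm of (y, t, lam, mu) \<Rightarrow>
                  ereal ((\<Sum>i=1..n. a i * y i) + lam * b + mu * real k + (\<Sum>i=1..n. t i)))"
proof -
  \<comment> \<open>Both identities hold for each \<open>y\<close> separately.\<close>
  let ?g = "\<lambda>ytlm. case ytlm of (y, t, lam, mu) \<Rightarrow>
                  ereal ((\<Sum>i=1..n. a i * y i) + lam * b + mu * real k + (\<Sum>i=1..n. t i))"
  have primal: "(INF y\<in>Y. ereal (\<Sum>i=1..n. a i * y i) + inner_max n k b d y)
           = (INF y\<in>Y. ereal ((\<Sum>i=1..n. a i * y i) + sqrt (b * s_val n k d y)))"
    using inner_max_eq_sqrt[OF assms(2-4)] by simp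
  have "{(y, t, lam, mu). y \<in> Y \<and> (\<forall>i\<in>{1..n}. t i \<ge> 0) \<and> lam \<ge> 0 \<and> mu \<ge> 0 \<and>
                   (\<forall>i\<in>{1..n}. (y i / d i)\<^sup>2 \<le> 4 * (t i + mu) * lam)} = Sigma Y (dual_feasible n d)"
    by (auto simp: dual_feasible_def)
  then have "(INF ytlm \<in> {(y, t, lam, mu). y \<in> Y \<and> (\<forall>i\<in>{1..n}. t i \<ge> 0) \<and> lam \<ge> 0 \<and> mu \<ge> 0 \<and>
                   (\<forall>i\<in>{1..n}. (y i / d i)\<^sup>2 \<le> 4 * (t i + mu) * lam)}. ?g ytlm)
      = (INF y\<in>Y. INF tlm\<in>dual_feasible n d y. ?g (y, tlm))"
    using INF_Sigma[where f="\<lambda>y tlm. ?g (y, tlm)" and A="Y" and B="dual_feasible n d"] by simp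
  also have "\<dots> = (INF y\<in>Y. ereal ((\<Sum>i=1..n. a i * y i) + sqrt (b * s_val n k d y)))"
    using dual_INF_eq_sqrt[OF assms(2-4)] by simp
  finally show ?thesis using primal by simp
qed

end
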